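(* Fix $\alpha\in(0,1/2)$ and $q_1,q_3\in(0,1)$. Define $m^*(3/4,3/4)=16\alpha$, $m^*(3/4,1/4)=m^*(1/4,3/4)=\frac{8(1-2\alpha)}{3}$, $m^*(1/4,1/4)=\frac{16\alpha}{9}$, $m^*=\frac{16(4\alpha+3)}{9}$, $\overline{\lambda}^*=1/m^*$, $$\overline{\lambda}=\frac{1}{m^*}\Big(m^*(\tfrac34,\tfrac34)\tfrac{1-q_3}{4}+m^*(\tfrac34,\tfrac14)\tfrac{3(1-q_3)}{4}+m^*(\tfrac14,\tfrac34)\tfrac{1-q_1}{4}+m^*(\tfrac14,\tfrac14)\tfrac{3(1-q_1)}{4}\Big),$$ and the treatment's steady-state total population $M=\frac{2(4\alpha+1)}{3(1-q_3)}+\frac{2(3-4\alpha)}{3(1-q_1)}$. If $6q_3+2q_1>5$ and $\frac{4\alpha+1}{1-q_3}+\frac{3-4\alpha}{1-q_1}<\frac{8(4\alpha+3)}{3}$, then $\overline{\lambda}<\overline{\lambda}^*$ but $M<m^*$.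
   Context: Model: user types $(x,e)\in\{1/4,3/4\}^2$ with per-period inflow masses $\alpha$ for $(3/4,3/4)$ and $(1/4,1/4)$ and $1/2-\alpha$ for $(3/4,1/4)$ and $(1/4,3/4)$; an algorithm gives quality $q(x)\in(0,1)$ to segment $x$ and a type-$(x,e)$ user churns each period with probability $(1-q(x))(1-e)$; the steady-state mass of type $(x,e)$ is $F(x,e)/((1-q(x))(1-e))$. $m^*(x,e)$ and $m^*$ are the status quo ($q^*(x)=x$) steady-state masses and total, $\overline{\lambda}^*$ its churn rate, $\overline{\lambda}$ the churn rate observed in a one-period experiment of the treatment ($q(1/4)=q_1$, $q(3/4)=q_3$) on the status quo population, and $M$ the treatment's own steady-state total population. *)

theory Defs
  imports Complex_Main
begin

definition mstar :: "real \<Rightarrow> real \<Rightarrow> real \<Rightarrow> real" where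
  "mstar \<alpha> x e =
     (if x = 3/4 \<and> e = 3/4 then 16 * \<alpha>
      else if x = 1/4 \<and> e = 1/4 then 16 * \<alpha> / 9
      else 8 * (1 - 2 * \<alpha>) / 3)"

definition mstar_total :: "real \<Rightarrow> real" where
  "mstar_total \<alpha> = 16 * (4 * \<alpha> + 3) / 9"

definition lambda_star :: "real \<Rightarrow> real" where
  "lambda_star \<alpha> = 1 / mstar_total \<alpha>"

definition lambda_exp :: "real \<Rightarrow> real \<Rightarrow> real \<Rightarrow> real" where
  "lambda_exp \<alpha> q1 q3 = (1 / mstar_total \<alpha>) *
     (mstar \<alpha> (3/4) (3/4) * ((1 - q3) / 4)
      + mstar \<alpha> (3/4) (1/4) * (3 * (1 - q3) / 4)
      + mstar \<alpha> (1/4) (3/4) * ((1 - q1) / 4)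
      + mstar \<alpha> (1/4) (1/4) * (3 * (1 - q1) / 4))"

definition M_treat :: "real \<Rightarrow> real \<Rightarrow> real \<Rightarrow> real" where
  "M_treat \<alpha> q1 q3 = 2 * (4 * \<alpha> + 1) / (3 * (1 - q3)) + 2 * (3 - 4 * \<alpha>) / (3 * (1 - q1))"

end

theory Submission
  imports Defs
begin

text \<open>Weighting the treatment's churn probabilities by the status-quo masses, the
  \<open>\<alpha>\<close>-dependence cancels: the experiment's total churn is \<open>(8 - 6 q\<^sub>3 - 2 q\<^sub>1)/3\<close>,
  whereas the status quo loses exactly one unit of mass per period.  Hence the
  experiment favours the treatment precisely when \<open>6 q\<^sub>3 + 2 q\<^sub>1 > 5\<close>.  The
  treatment's own steady state, on the other hand, is \<open>2/3\<close> times the left-hand side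
  of the second hypothesis, so that hypothesis says exactly \<open>M < m\<^sup>*\<close>.\<close>

lemma mstar_total_pos: "-3/4 < \<alpha> \<Longrightarrow> 0 < mstar_total \<alpha>"
  by (simp add: mstar_total_def)

lemma lambda_exp_eq: "lambda_exp \<alpha> q1 q3 = (8 - 6 * q3 - 2 * q1) / 3 / mstar_total \<alpha>"
proof -
  have churn: "mstar \<alpha> (3/4) (3/4) * ((1 - q3) / 4) + mstar \<alpha> (3/4) (1/4) * (3 * (1 - q3) / 4)
      + mstar \<alpha> (1/4) (3/4) * ((1 - q1) / 4) + mstar \<alpha> (1/4) (1/4) * (3 * (1 - q1) / 4)
      = (8 - 6 * q3 - 2 * q1) / 3"
    by (simp add: mstar_def field_simps)
  show ?thesis
    unfolding lambda_exp_def churn by simp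
qed

lemma lambda_exp_less_lambda_star_iff:
  assumes "-3/4 < \<alpha>"
  shows "lambda_exp \<alpha> q1 q3 < lambda_star \<alpha> \<longleftrightarrow> 6 * q3 + 2 * q1 > 5"
proof -
  have "lambda_exp \<alpha> q1 q3 < lambda_star \<alpha> \<longleftrightarrow> (8 - 6 * q3 - 2 * q1) / 3 < 1"
    unfolding lambda_exp_eq lambda_star_def
    using mstar_total_pos [OF assms] by (simp add: divide_less_eq)
  also have "\<dots> \<longleftrightarrow> 6 * q3 + 2 * q1 > 5"
    by (simp add: field_simps)
  finally show ?thesis .
qed

lemma M_treat_eq:
  "M_treat \<alpha> q1 q3 = 2/3 * ((4 * \<alpha> + 1) / (1 - q3) + (3 - 4 * \<alpha>) / (1 - q1))"
proof -
  have scale: "2 * x / (3 * y) = 2/3 * (x / y)" for x y :: real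
    by simp
  show ?thesis
    unfolding M_treat_def scale by (rule distrib_left [symmetric])
qed

lemma M_treat_less_mstar_total_iff:
  "M_treat \<alpha> q1 q3 < mstar_total \<alpha> \<longleftrightarrow>
     (4 * \<alpha> + 1) / (1 - q3) + (3 - 4 * \<alpha>) / (1 - q1) < 8 * (4 * \<alpha> + 3) / 3"
proof -
  have "2/3 * S < 16 * (4 * \<alpha> + 3) / 9 \<longleftrightarrow> S < 8 * (4 * \<alpha> + 3) / 3" for S :: real
    by linarith
  then show ?thesis
    unfolding M_treat_eq mstar_total_def .
qed

theorem lemma3:
  fixes \<alpha> q1 q3 :: real
  assumes "0 < \<alpha>" "\<alpha> < 1/2"
    and "0 < q1" "q1 < 1" "0 < q3" "q3 < 1"
    and "6 * q3 + 2 * q1 > 5"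
    and "(4 * \<alpha> + 1) / (1 - q3) + (3 - 4 * \<alpha>) / (1 - q1) < 8 * (4 * \<alpha> + 3) / 3"
  shows "lambda_exp \<alpha> q1 q3 < lambda_star \<alpha> \<and> M_treat \<alpha> q1 q3 < mstar_total \<alpha>"
  using assms(1,7,8)
  by (simp add: lambda_exp_less_lambda_star_iff M_treat_less_mstar_total_iff)

end
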